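(* Fix $n,\mu\in\mathbb{N}$ and $\delta\in\mathbb{R}$. Let $S$ be the set of pairs $(x,z)\in(0,+\infty)^n\times(-\delta,+\infty)^n$ such that $x_1\geq x_2\geq\cdots\geq x_n$ and, writing $p_i=x_i^{1/\mu}-\delta$ (so that $x=(p+\delta)^{\mu\downarrow}$), $$(p+\delta)^{\mu}\succ_w (z+\delta)^{\mu}\quad\text{and}\quad \sum_{i=1}^n (p_i+\delta)^k\geq\sum_{i=1}^n (z_i+\delta)^k\ \text{ for all }k\in\{1,\dots,\mu-1\}.$$ Then $S$ is a convex subset of $\mathbb{R}^n\times\mathbb{R}^n$.
   Context: $(y+\delta)^\mu$ denotes the vector with components $(y_i+\delta)^\mu$, and $y^{\downarrow}$ the vector of components of $y$ sorted in descending order. $x\succ_w y$ (weak majorization) means $\sum_{i=1}^k x^{\downarrow}_i\geq\sum_{i=1}^k y^{\downarrow}_i$ for all $k=1,\dots,n$. (These are the hypotheses of a sufficient condition for $K\prod(s-z_i)/\prod(s-p_i)$, $K>0$, with real zeros and poles, to be logarithmically completely monotonic.) *)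

theory Defs
  imports "HOL-Analysis.Analysis"
begin

definition dsort :: "real ^ 'n::{finite,linorder} \<Rightarrow> real list" where
  "dsort y = rev (sort (map (\<lambda>i. y $ i) (sorted_list_of_set (UNIV :: 'n set))))"

definition weak_majorizes :: "real ^ 'n::{finite,linorder} \<Rightarrow> real ^ 'n::{finite,linorder} \<Rightarrow> bool" where
  "weak_majorizes x y \<longleftrightarrow>
     (\<forall>k\<in>{1..CARD('n)}. sum_list (take k (dsort x)) \<ge> sum_list (take k (dsort y)))"

end

theory Submission
  imports Defs
begin

text \<open>
  Substituting \<open>x\<^sub>i = (p\<^sub>i + \<delta>)\<^sup>\<mu>\<close>, the conditions become: \<open>x\<close> is positive and decreasing,
  \<open>x \<succ>\<^sub>w (z + \<delta>)\<^sup>\<mu>\<close>, and \<open>\<Sum> (z\<^sub>i + \<delta>)\<^sup>k \<le> \<Sum> x\<^sub>i\<^bsup>k/\<mu>\<^esup>\<close>. The sum of the \<open>k\<close> largest entries of a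
  vector is the maximum of its sums over \<open>k\<close>-element index sets, hence a convex and monotone
  function of the vector; composed with the convex map \<open>z \<mapsto> (z + \<delta>)\<^sup>\<mu>\<close> it stays convex.
  On decreasing vectors it is the linear function \<open>x\<^sub>1 + \<dots> + x\<^sub>k\<close>. Each majorization constraint
  therefore bounds a convex function by a linear one, and each power-sum constraint bounds a convex
  function of \<open>z\<close> by the concave function \<open>\<Sum> x\<^sub>i\<^bsup>k/\<mu>\<^esup>\<close>; the set is an intersection of convex sets.
\<close>

definition top_sum :: "nat \<Rightarrow> real ^ 'n::{finite,linorder} \<Rightarrow> real" where
  "top_sum k v = sum_list (take k (dsort v))"

lemma weak_majorizes_top_sum:
  fixes x y :: "real ^ 'n::{finite,linorder}"
  shows "weak_majorizes x y \<longleftrightarrow> (\<forall>k\<in>{1..CARD('n)}. top_sum k y \<le> top_sum k x)"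
  by (simp add: weak_majorizes_def top_sum_def)

lemma sum_le_sum_exchange:
  fixes f :: "'a \<Rightarrow> real"
  assumes "finite S" "finite T" "card T = card S" "\<forall>i\<in>T - S. \<forall>j\<in>S - T. f i \<le> f j"
  shows "sum f T \<le> sum f S"
proof -
  have card_diff: "card (T - S) = card (S - T)"
    using assms by (simp add: card_Diff_subset_Int Int_commute)
  have "sum f (T - S) \<le> sum f (S - T)"
  proof (cases "S - T = {}")
    case True
    then have "T - S = {}" using card_diff assms by (metis card_0_eq finite_Diff)
    then show ?thesis using True by simp
  next
    case False
    define t where "t = Min (f ` (S - T))"
    have "sum f (T - S) \<le> of_nat (card (T - S)) * t"
      using assms False by (intro sum_bounded_above) (auto simp: t_def intro!: Min.boundedI)
    also have "\<dots> \<le> sum f (S - T)"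
      unfolding card_diff t_def using assms by (intro sum_bounded_below) auto
    finally show ?thesis .
  qed
  moreover have "sum f T = sum f (T \<inter> S) + sum f (T - S)" "sum f S = sum f (S \<inter> T) + sum f (S - T)"
    using assms by (simp_all add: sum.Int_Diff)
  ultimately show ?thesis by (simp add: Int_commute)
qed

lemma ex_decreasing_enumeration:
  fixes v :: "real ^ 'n::{finite,linorder}"
  obtains J where "distinct J" "set J = UNIV" "sorted_wrt (\<ge>) (map (($) v) J)"
proof
  let ?J = "sort_key (\<lambda>i. - v $ i) (sorted_list_of_set (UNIV :: 'n set))"
  show "distinct ?J" "set ?J = UNIV" by simp_all
  have "sorted (map (\<lambda>i. - v $ i) ?J)" by (rule sorted_sort_key)
  then show "sorted_wrt (\<ge>) (map (($) v) ?J)" by (simp add: sorted_wrt_map)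
qed

lemma dsort_eq_map:
  fixes v :: "real ^ 'n::{finite,linorder}"
  assumes "distinct J" "set J = UNIV" "sorted_wrt (\<ge>) (map (($) v) J)"
  shows "dsort v = map (($) v) J"
proof -
  have "mset J = mset (sorted_list_of_set (UNIV :: 'n set))"
    using assms by (simp add: set_eq_iff_mset_eq_distinct[symmetric])
  then have "sort (map (($) v) (sorted_list_of_set UNIV)) = rev (map (($) v) J)"
    using assms(3) by (intro properties_for_sort) (auto simp: sorted_wrt_rev mset_map)
  then show ?thesis by (simp add: dsort_def)
qed

lemma top_sum_eq_sum_take:
  fixes v :: "real ^ 'n::{finite,linorder}"
  assumes "distinct J" "set J = UNIV" "sorted_wrt (\<ge>) (map (($) v) J)"
  shows "top_sum k v = (\<Sum>i\<in>set (take k J). v $ i)"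
  using dsort_eq_map[OF assms] assms(1)
  by (simp add: top_sum_def take_map sum_list_distinct_conv_sum_set)

lemma top_sum_of_antimono:
  fixes v :: "real ^ 'n::{finite,linorder}"
  assumes "antimono (($) v)"
  shows "top_sum k v = (\<Sum>i\<in>set (take k (sorted_list_of_set (UNIV :: 'n set))). v $ i)"
proof (rule top_sum_eq_sum_take)
  show "sorted_wrt (\<ge>) (map (($) v) (sorted_list_of_set (UNIV :: 'n set)))"
    unfolding sorted_wrt_map
    by (rule sorted_wrt_mono_rel[OF _ sorted_sorted_list_of_set]) (use assms in \<open>auto dest: antimonoD\<close>)
qed simp_all

lemma sum_le_top_sum:
  fixes v :: "real ^ 'n::{finite,linorder}"
  assumes "card T = k"
  shows "(\<Sum>i\<in>T. v $ i) \<le> top_sum k v"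
proof -
  obtain J where J: "distinct J" "set J = UNIV" "sorted_wrt (\<ge>) (map (($) v) J)"
    by (rule ex_decreasing_enumeration)
  have "length J = CARD('n)" using J distinct_card by fastforce
  moreover have "card T \<le> CARD('n)" by (simp add: card_mono)
  ultimately have card_top: "card (set (take k J)) = k"
    using assms J(1) by (simp add: distinct_card)
  have "v $ i \<le> v $ j" if "i \<in> T - set (take k J)" "j \<in> set (take k J) - T" for i j
  proof -
    have "i \<in> set (drop k J)"
      using that J(2) by (metis DiffD2 UNIV_I Un_iff append_take_drop_id set_append)
    moreover have "sorted_wrt (\<ge>) (map (($) v) (take k J) @ map (($) v) (drop k J))"
      using J(3) by (metis append_take_drop_id map_append)
    ultimately show ?thesis using that by (auto simp: sorted_wrt_append)
  qed
  then have "(\<Sum>i\<in>T. v $ i) \<le> (\<Sum>i\<in>set (take k J). v $ i)"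
    using card_top assms by (intro sum_le_sum_exchange) auto
  then show ?thesis using top_sum_eq_sum_take[OF J] by simp
qed

lemma top_sum_attained:
  fixes v :: "real ^ 'n::{finite,linorder}"
  assumes "k \<le> CARD('n)"
  obtains T where "card T = k" "top_sum k v = (\<Sum>i\<in>T. v $ i)"
proof -
  obtain J where J: "distinct J" "set J = UNIV" "sorted_wrt (\<ge>) (map (($) v) J)"
    by (rule ex_decreasing_enumeration)
  have "length J = CARD('n)" using J distinct_card by fastforce
  then have "card (set (take k J)) = k" using J(1) assms by (simp add: distinct_card)
  then show ?thesis using that top_sum_eq_sum_take[OF J] by blast
qed

lemma top_sum_le_convex_comb:
  fixes w a b :: "real ^ 'n::{finite,linorder}"
  assumes "k \<le> CARD('n)" "0 \<le> u" "0 \<le> v" "\<And>i. w $ i \<le> u * a $ i + v * b $ i"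
  shows "top_sum k w \<le> u * top_sum k a + v * top_sum k b"
proof -
  obtain T where T: "card T = k" "top_sum k w = (\<Sum>i\<in>T. w $ i)"
    using assms(1) by (rule top_sum_attained)
  have "(\<Sum>i\<in>T. w $ i) \<le> u * (\<Sum>i\<in>T. a $ i) + v * (\<Sum>i\<in>T. b $ i)"
    using assms(4) by (simp add: sum_distrib_left flip: sum.distrib) (rule sum_mono)
  also have "\<dots> \<le> u * top_sum k a + v * top_sum k b"
    using assms(2,3) T(1) by (intro add_mono mult_left_mono sum_le_top_sum)
  finally show ?thesis using T(2) by simp
qed

lemma top_sum_convex_comb_of_antimono:
  fixes a b :: "real ^ 'n::{finite,linorder}"
  assumes "antimono (($) a)" "antimono (($) b)" "0 \<le> u" "0 \<le> v"
  shows "top_sum k (u *\<^sub>R a + v *\<^sub>R b) = u * top_sum k a + v * top_sum k b"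
proof -
  have "antimono (($) (u *\<^sub>R a + v *\<^sub>R b))"
    using assms by (auto intro!: antimonoI add_mono mult_left_mono dest: antimonoD)
  then show ?thesis
    using assms by (simp add: top_sum_of_antimono sum.distrib sum_distrib_left)
qed

lemma convex_weak_majorization_set:
  assumes "convex_on C f"
  shows "convex {(x :: real ^ 'n::{finite,linorder}, z :: real ^ 'n::{finite,linorder}).
           antimono (($) x) \<and> (\<forall>i. z $ i \<in> C) \<and> weak_majorizes x (\<chi> i. f (z $ i))}"
    (is "convex ?M")
proof (rule convexI)
  fix p q and u v :: real
  assume "p \<in> ?M" "q \<in> ?M" and uv: "0 \<le> u" "0 \<le> v" "u + v = 1"
  then obtain x1 z1 x2 z2 where pq: "p = (x1, z1)" "q = (x2, z2)"
    and x: "antimono (($) x1)" "antimono (($) x2)" and z: "\<forall>i. z1 $ i \<in> C" "\<forall>i. z2 $ i \<in> C"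
    and maj: "weak_majorizes x1 (\<chi> i. f (z1 $ i))" "weak_majorizes x2 (\<chi> i. f (z2 $ i))"
    by auto
  have C: "convex C" using assms by (rule convex_on_imp_convex)
  have f_conv: "f (u * a + v * b) \<le> u * f a + v * f b" if "a \<in> C" "b \<in> C" for a b
    using assms that uv unfolding convex_on_def by simp
  have "antimono (($) (u *\<^sub>R x1 + v *\<^sub>R x2))"
    using x uv by (auto intro!: antimonoI add_mono mult_left_mono dest: antimonoD)
  moreover have "\<forall>i. u * z1 $ i + v * z2 $ i \<in> C"
    using convexD[OF C] z uv by simp
  moreover have "top_sum k (\<chi> i. f (u * z1 $ i + v * z2 $ i)) \<le> top_sum k (u *\<^sub>R x1 + v *\<^sub>R x2)"
    if k: "k \<in> {1..CARD('n)}" for k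
  proof -
    have "top_sum k (\<chi> i. f (u * z1 $ i + v * z2 $ i))
          \<le> u * top_sum k (\<chi> i. f (z1 $ i)) + v * top_sum k (\<chi> i. f (z2 $ i))"
      using k uv z f_conv by (intro top_sum_le_convex_comb) simp_all
    also have "\<dots> \<le> u * top_sum k x1 + v * top_sum k x2"
      using k uv maj by (intro add_mono mult_left_mono) (auto simp: weak_majorizes_top_sum)
    also have "\<dots> = top_sum k (u *\<^sub>R x1 + v *\<^sub>R x2)"
      using x uv by (simp add: top_sum_convex_comb_of_antimono)
    finally show ?thesis .
  qed
  ultimately show "u *\<^sub>R p + v *\<^sub>R q \<in> ?M"
    by (simp add: pq weak_majorizes_top_sum)
qed

lemma convex_sum_convex_le_sum_concave:
  assumes "convex_on C f" "concave_on D g"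
  shows "convex {(x :: real ^ 'n::finite, z :: real ^ 'n::finite).
           (\<forall>i. x $ i \<in> D) \<and> (\<forall>i. z $ i \<in> C) \<and> (\<Sum>i\<in>UNIV. f (z $ i)) \<le> (\<Sum>i\<in>UNIV. g (x $ i))}"
    (is "convex ?P")
proof (rule convexI)
  fix p q and u v :: real
  assume "p \<in> ?P" "q \<in> ?P" and uv: "0 \<le> u" "0 \<le> v" "u + v = 1"
  then obtain x1 z1 x2 z2 where pq: "p = (x1, z1)" "q = (x2, z2)"
    and x: "\<forall>i. x1 $ i \<in> D" "\<forall>i. x2 $ i \<in> D" and z: "\<forall>i. z1 $ i \<in> C" "\<forall>i. z2 $ i \<in> C"
    and le: "(\<Sum>i\<in>UNIV. f (z1 $ i)) \<le> (\<Sum>i\<in>UNIV. g (x1 $ i))"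
      "(\<Sum>i\<in>UNIV. f (z2 $ i)) \<le> (\<Sum>i\<in>UNIV. g (x2 $ i))"
    by auto
  have comb: "u * a + v * b \<in> S" if "convex S" "a \<in> S" "b \<in> S" for S and a b :: real
    using convexD[OF that uv] by simp
  have "convex C" "convex D"
    using assms by (simp_all add: convex_on_imp_convex concave_on_imp_convex)
  then have "\<forall>i. u * x1 $ i + v * x2 $ i \<in> D" "\<forall>i. u * z1 $ i + v * z2 $ i \<in> C"
    using x z by (simp_all add: comb)
  moreover have "(\<Sum>i\<in>UNIV. f (u * z1 $ i + v * z2 $ i)) \<le> (\<Sum>i\<in>UNIV. g (u * x1 $ i + v * x2 $ i))"
  proof -
    have "(\<Sum>i\<in>UNIV. f (u * z1 $ i + v * z2 $ i)) \<le> (\<Sum>i\<in>UNIV. u * f (z1 $ i) + v * f (z2 $ i))"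
      using assms(1) z uv by (intro sum_mono) (simp add: convex_on_def)
    also have "\<dots> \<le> (\<Sum>i\<in>UNIV. u * g (x1 $ i) + v * g (x2 $ i))"
      using le uv by (simp add: sum.distrib flip: sum_distrib_left) (intro add_mono mult_left_mono)
    also have "\<dots> \<le> (\<Sum>i\<in>UNIV. g (u * x1 $ i + v * x2 $ i))"
      using assms(2) x uv by (intro sum_mono) (simp add: concave_on_iff)
    finally show ?thesis .
  qed
  ultimately show "u *\<^sub>R p + v *\<^sub>R q \<in> ?P"
    by (simp add: pq)
qed

lemma convex_on_shifted_power: "convex_on {-\<delta>..} (\<lambda>t::real. (t + \<delta>) ^ m)"
proof (rule f''_ge0_imp_convex)
  show "((\<lambda>t. (t + \<delta>) ^ m) has_real_derivative of_nat m * (t + \<delta>) ^ (m - 1)) (at t)" for t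
    by (rule derivative_eq_intros | simp)+
  show "((\<lambda>t. of_nat m * (t + \<delta>) ^ (m - 1)) has_real_derivative
          of_nat m * of_nat (m - 1) * (t + \<delta>) ^ (m - 2)) (at t)" for t
    by (rule derivative_eq_intros | simp add: eval_nat_numeral)+
  show "0 \<le> of_nat m * of_nat (m - 1) * (t + \<delta>) ^ (m - 2)" if "t \<in> {-\<delta>..}" for t
    using that by simp
qed simp

lemma concave_on_powr:
  assumes "0 \<le> r" "r \<le> 1"
  shows "concave_on {0<..} (\<lambda>t::real. t powr r)"
proof (rule f''_le0_imp_concave)
  show "((\<lambda>t. t powr r) has_real_derivative r * t powr (r - 1)) (at t)" if "t \<in> {0<..}" for t
    using that by (auto intro!: derivative_eq_intros)
  show "((\<lambda>t. r * t powr (r - 1)) has_real_derivative r * ((r - 1) * t powr (r - 2))) (at t)"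
    if "t \<in> {0<..}" for t
    using that by (auto intro!: derivative_eq_intros simp: algebra_simps)
  show "r * ((r - 1) * t powr (r - 2)) \<le> 0" if "t \<in> {0<..}" for t
    using assms by (simp add: mult_nonneg_nonpos mult_nonpos_nonneg)
qed simp

theorem proposition8:
  fixes \<mu> :: nat and \<delta> :: real
  assumes "\<mu> \<ge> 1"
  shows "convex {(x :: real ^ 'n::{finite,linorder}, z :: real ^ 'n::{finite,linorder}).
            (\<forall>i. 0 < x $ i) \<and> (\<forall>i. - \<delta> < z $ i) \<and>
            (\<forall>i j. i \<le> j \<longrightarrow> x $ j \<le> x $ i) \<and>
            (let p = (\<chi> i. x $ i powr (1 / real \<mu>) - \<delta>) in
               weak_majorizes (\<chi> i. (p $ i + \<delta>) ^ \<mu>) (\<chi> i. (z $ i + \<delta>) ^ \<mu>) \<and>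
               (\<forall>k\<in>{1..\<mu> - 1}. (\<Sum>i\<in>UNIV. (p $ i + \<delta>) ^ k) \<ge> (\<Sum>i\<in>UNIV. (z $ i + \<delta>) ^ k)))}"
    (is "convex ?S")
proof -
  let ?box = "{x :: real ^ 'n::{finite,linorder}. \<forall>i. 0 < x $ i} \<times> {z. \<forall>i. - \<delta> < z $ i}"
  let ?M = "{(x, z).
              antimono (($) x) \<and> (\<forall>i. z $ i \<in> {-\<delta>..}) \<and> weak_majorizes x (\<chi> i. (z $ i + \<delta>) ^ \<mu>)}"
  let ?P = "\<lambda>k. {(x :: real ^ 'n::{finite,linorder}, z :: real ^ 'n::{finite,linorder}).
              (\<forall>i. x $ i \<in> {0<..}) \<and> (\<forall>i. z $ i \<in> {-\<delta>..}) \<and>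
              (\<Sum>i\<in>UNIV. (z $ i + \<delta>) ^ k) \<le> (\<Sum>i\<in>UNIV. x $ i powr (real k / real \<mu>))}"
  have root_power: "(t powr (1 / real \<mu>)) ^ k = t powr (real k / real \<mu>)" if "0 < t" for t :: real and k
    using that by (simp add: powr_powr flip: powr_realpow)
  have S_eq: "?S = ?box \<inter> ?M \<inter> (\<Inter>k\<in>{1..\<mu> - 1}. ?P k)"
    using assms by (auto simp: root_power antimono_def vec_eq_iff less_imp_le)
  have "convex ?box"
    by (intro convex_Times convex_box_cart) (simp_all flip: greaterThan_def)
  moreover have "convex ?M"
    by (rule convex_weak_majorization_set[OF convex_on_shifted_power])
  moreover have "convex (?P k)" if "k \<in> {1..\<mu> - 1}" for k
    using that
    by (intro convex_sum_convex_le_sum_concave[OF convex_on_shifted_power concave_on_powr]) auto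
  ultimately show ?thesis
    unfolding S_eq by (intro convex_Int convex_INT)
qed

end
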